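(* Suppose $L_p,\Psi_p$ satisfy $(A_p-L_pC_p)\Psi_p\oplus\mathbb{W}_p\oplus(-L_p\mathbb{V}_p)\subseteq\Psi_p$ with $0\in\Psi_p$, and suppose $H\in\mathbb{N}$, $K_p$, $\Omega_p\ni0$ and $(\mu,\eta,\Omega)$ are given by one of the following three options: (ZOH) $(A_p^i+B_p^iK_p)\Omega_p\oplus\big(\bigoplus_{j=0}^{i-1}A_p^jL_p(C_p\Psi_p\oplus\mathbb{V}_p)\big)\subseteq\Omega_p$ for all $i\in\{1,\dots,H\}$, $\mu(\bar\nu_c,\hat x_p,\bar x_p)=\bar\nu_c+K_p(\hat x_p-\bar x_p)$, $\eta\equiv0$, $\Omega=\Omega_p\times K_p\Omega_p\times\{0\}$; (prediction-based) $(A_p+B_pK_p)^i\Omega_p\oplus\big(\bigoplus_{j=0}^{i-1}A_p^jL_p(C_p\Psi_p\oplus\mathbb{V}_p)\big)\subseteq\Omega_p$ for all $i\in\{1,\dots,H\}$, $\mu(\bar\nu_c,\hat x_p,\bar x_p)=\bar\nu_c$, $\eta(\hat x_p,\tilde x_p,\bar x_p)=K_p(\tilde x_p-\bar x_p)$, $\Omega=\Omega_p\times\{0\}\times\{0\}$; (local measurement) $(A_p+B_pK_p)\Omega_p\oplus L_p(C_p\Psi_p\oplus\mathbb{V}_p)\subseteq\Omega_p$, $\mu(\bar\nu_c,\hat x_p,\bar x_p)=\bar\nu_c$, $\eta(\hat x_p,\tilde x_p,\bar x_p)=K_p(\hat x_p-\bar x_p)$, $\Omega=\Omega_p\times\{0\}\times\{0\}$.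 Let $t\in\mathbb{N}_0$, $h\in\{1,\dots,H\}$, and let nominal inputs $\bar u(i)=(\bar u_c(i),\bar\gamma(i),0)$, $i=t,\dots,t+h-1$, be given with $\bar\gamma(t)=1$ and $\bar\gamma(i)=0$ for $i\in\{t+1,\dots,t+h-1\}$. Let $x(t),\hat x(t),\bar x(t)$ be given with $\hat x(t)-\bar x(t)\in\Omega$ and $x(t)-\hat x(t)\in\Psi:=\Psi_p\times\{0\}\times\{0\}$, and set $\tilde x(t):=\hat x(t)$. For $i=t,\dots,t+h-1$ apply $u(i):=\phi'(\bar u(i),\hat x(i),\tilde x(i),\bar x(i))$ if $\bar\gamma(i)=1$ and $u(i):=\phi''(\bar u(i),\hat x(i),\tilde x(i),\bar x(i))$ if $\bar\gamma(i)=0$, and let the states evolve by $\bar x(i+1)=f(\bar x(i),\bar u(i))$, $\tilde x(i+1)=f(\tilde x(i),u(i))$, $x(i+1)=f(x(i),u(i))+w(i)$, $\hat x(i+1)=f(\hat x(i),u(i))+B_\epsilon(x(i)-\hat x(i))+B_vv(i)$. Then for all sequences $w(i)\in\mathbb{W}$, $v(i)\in\mathbb{V}$ ($i=t,\dots,t+h-1$) it holds for all $i\in\{t,\dots,t+h\}$ that $\hat x(i)\in\{\bar x(i)\}\oplus\Omega$ and $x(i)\in\{\hat x(i)\}\oplus\Psi\subseteq\{\bar x(i)\}\oplus\Omega\oplus\Psi$.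
   Context: $A_p\in\mathbb{R}^{n_p\times n_p}$, $B_p\in\mathbb{R}^{n_p\times m_p}$, $C_p\in\mathbb{R}^{q_p\times n_p}$; $\mathbb{W}_p\subseteq\mathbb{R}^{n_p}$, $\mathbb{V}_p\subseteq\mathbb{R}^{q_p}$ compact convex sets containing the origin; $L_p\in\mathbb{R}^{n_p\times q_p}$, $K_p\in\mathbb{R}^{m_p\times n_p}$; $B_p^i:=\sum_{j=0}^{i-1}A_p^jB_p$; integers $g\ge1$, $c\ge g$, $b\ge c$. Overall state $x=(x_p,u_s,\beta)\in\mathbb{R}^{n_p}\times\mathbb{R}^{m_p}\times\mathbb{R}$ (similarly $\hat x,\tilde x,\bar x$ with components $\hat x_p$ etc.), input $u=(u_c,\gamma,u_e)\in\mathbb{R}^{m_p}\times\{0,1\}\times\mathbb{R}^{m_p}$, $$f(x,u):=\begin{bmatrix}A_px_p+B_p((1-\gamma)u_s+\gamma u_c+u_e)\\ (1-\gamma)u_s+\gamma u_c\\ \min\{\beta+g-\gamma c,\,b\}\end{bmatrix}.$$ $\mathbb{W}:=\mathbb{W}_p\times\{0\}\times\{0\}$, $\mathbb{V}:=\mathbb{V}_p\times\{0\}\times\{0\}$, $B_\epsilon:=\mathrm{diag}\{L_pC_p,0,0\}$, $B_v:=\mathrm{diag}\{L_p,0,0\}$. For $\bar u=(\bar u_c,\bar\gamma,\cdot)$: $\phi'(\bar u,\hat x,\tilde x,\bar x):=(\mu(\bar u_c,\hat x_p,\bar x_p),1,\eta(\hat x_p,\tilde x_p,\bar x_p))$ and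 $\phi''(\bar u,\hat x,\tilde x,\bar x):=(0,0,\eta(\hat x_p,\tilde x_p,\bar x_p))$. $\oplus$ is Minkowski sum. *)

theory Defs
  imports "HOL-Analysis.Analysis"
begin

definition msum :: "'a::plus set \<Rightarrow> 'a set \<Rightarrow> 'a set" where
  "msum X Y = {x + y | x y. x \<in> X \<and> y \<in> Y}"

fun msumN :: "nat \<Rightarrow> (nat \<Rightarrow> 'a::monoid_add set) \<Rightarrow> 'a set" where
  "msumN 0 S = {0}"
| "msumN (Suc k) S = msum (msumN k S) (S k)"

definition lin :: "((real^'n)^'m) \<Rightarrow> (real^'n) set \<Rightarrow> (real^'m) set" where
  "lin M X = (\<lambda>x. M *v x) ` X"

definition mpow :: "((real^'n)^'n) \<Rightarrow> nat \<Rightarrow> ((real^'n)^'n)" where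
  "mpow A i = ((\<lambda>M. A ** M) ^^ i) (mat 1)"

definition Bpow :: "((real^'n)^'n) \<Rightarrow> ((real^'m)^'n) \<Rightarrow> nat \<Rightarrow> ((real^'m)^'n)" where
  "Bpow A B i = (\<Sum>j<i. mpow A j ** B)"

definition fsys :: "((real^'n)^'n) \<Rightarrow> ((real^'m)^'n) \<Rightarrow> int \<Rightarrow> int \<Rightarrow> int
    \<Rightarrow> ((real^'n) \<times> (real^'m) \<times> real) \<Rightarrow> ((real^'m) \<times> real \<times> (real^'m))
    \<Rightarrow> ((real^'n) \<times> (real^'m) \<times> real)" where
  "fsys A B g c b x u =
     (case x of (xp, us, \<beta>) \<Rightarrow> case u of (uc, \<gamma>, ue) \<Rightarrow>
       (A *v xp + B *v ((1 - \<gamma>) *\<^sub>R us + \<gamma> *\<^sub>R uc + ue),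
        (1 - \<gamma>) *\<^sub>R us + \<gamma> *\<^sub>R uc,
        min (\<beta> + of_int g - \<gamma> * of_int c) (of_int b)))"

definition LCPV :: "((real^'q)^'n) \<Rightarrow> ((real^'n)^'q) \<Rightarrow> (real^'n) set \<Rightarrow> (real^'q) set \<Rightarrow> (real^'n) set" where
  "LCPV L C Psip Vp = lin L (msum (lin C Psip) Vp)"

definition opt_ZOH :: "((real^'n)^'n) \<Rightarrow> ((real^'m)^'n) \<Rightarrow> ((real^'q)^'n) \<Rightarrow> ((real^'n)^'q) \<Rightarrow> ((real^'n)^'m)
    \<Rightarrow> (real^'n) set \<Rightarrow> (real^'q) set \<Rightarrow> nat \<Rightarrow> (real^'n) set
    \<Rightarrow> ((real^'m) \<Rightarrow> (real^'n) \<Rightarrow> (real^'n) \<Rightarrow> (real^'m))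
    \<Rightarrow> ((real^'n) \<Rightarrow> (real^'n) \<Rightarrow> (real^'n) \<Rightarrow> (real^'m))
    \<Rightarrow> ((real^'n) \<times> (real^'m) \<times> real) set \<Rightarrow> bool" where
  "opt_ZOH A B L C K Psip Vp H Omegap \<mu> \<eta> Omega \<longleftrightarrow>
     (\<forall>i\<in>{1..H}. msum (lin (mpow A i + Bpow A B i ** K) Omegap)
                        (msumN i (\<lambda>j. lin (mpow A j) (LCPV L C Psip Vp))) \<subseteq> Omegap)
   \<and> (\<forall>\<nu> xh xb. \<mu> \<nu> xh xb = \<nu> + K *v (xh - xb))
   \<and> (\<forall>xh xt xb. \<eta> xh xt xb = 0)
   \<and> Omega = Omegap \<times> lin K Omegap \<times> {0}"

definition opt_pred :: "((real^'n)^'n) \<Rightarrow> ((real^'m)^'n) \<Rightarrow> ((real^'q)^'n) \<Rightarrow> ((real^'n)^'q) \<Rightarrow> ((real^'n)^'m)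
    \<Rightarrow> (real^'n) set \<Rightarrow> (real^'q) set \<Rightarrow> nat \<Rightarrow> (real^'n) set
    \<Rightarrow> ((real^'m) \<Rightarrow> (real^'n) \<Rightarrow> (real^'n) \<Rightarrow> (real^'m))
    \<Rightarrow> ((real^'n) \<Rightarrow> (real^'n) \<Rightarrow> (real^'n) \<Rightarrow> (real^'m))
    \<Rightarrow> ((real^'n) \<times> (real^'m) \<times> real) set \<Rightarrow> bool" where
  "opt_pred A B L C K Psip Vp H Omegap \<mu> \<eta> Omega \<longleftrightarrow>
     (\<forall>i\<in>{1..H}. msum (lin (mpow (A + B ** K) i) Omegap)
                        (msumN i (\<lambda>j. lin (mpow A j) (LCPV L C Psip Vp))) \<subseteq> Omegap)
   \<and> (\<forall>\<nu> xh xb. \<mu> \<nu> xh xb = \<nu>)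
   \<and> (\<forall>xh xt xb. \<eta> xh xt xb = K *v (xt - xb))
   \<and> Omega = Omegap \<times> {0} \<times> {0}"

definition opt_local :: "((real^'n)^'n) \<Rightarrow> ((real^'m)^'n) \<Rightarrow> ((real^'q)^'n) \<Rightarrow> ((real^'n)^'q) \<Rightarrow> ((real^'n)^'m)
    \<Rightarrow> (real^'n) set \<Rightarrow> (real^'q) set \<Rightarrow> (real^'n) set
    \<Rightarrow> ((real^'m) \<Rightarrow> (real^'n) \<Rightarrow> (real^'n) \<Rightarrow> (real^'m))
    \<Rightarrow> ((real^'n) \<Rightarrow> (real^'n) \<Rightarrow> (real^'n) \<Rightarrow> (real^'m))
    \<Rightarrow> ((real^'n) \<times> (real^'m) \<times> real) set \<Rightarrow> bool" where
  "opt_local A B L C K Psip Vp Omegap \<mu> \<eta> Omega \<longleftrightarrow>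
     msum (lin (A + B ** K) Omegap) (LCPV L C Psip Vp) \<subseteq> Omegap
   \<and> (\<forall>\<nu> xh xb. \<mu> \<nu> xh xb = \<nu>)
   \<and> (\<forall>xh xt xb. \<eta> xh xt xb = K *v (xh - xb))
   \<and> Omega = Omegap \<times> {0} \<times> {0}"

definition phi1 :: "((real^'m) \<Rightarrow> (real^'n) \<Rightarrow> (real^'n) \<Rightarrow> (real^'m))
    \<Rightarrow> ((real^'n) \<Rightarrow> (real^'n) \<Rightarrow> (real^'n) \<Rightarrow> (real^'m))
    \<Rightarrow> ((real^'m) \<times> real \<times> (real^'m)) \<Rightarrow> ((real^'n) \<times> (real^'m) \<times> real)
    \<Rightarrow> ((real^'n) \<times> (real^'m) \<times> real) \<Rightarrow> ((real^'n) \<times> (real^'m) \<times> real)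
    \<Rightarrow> ((real^'m) \<times> real \<times> (real^'m))" where
  "phi1 \<mu> \<eta> ub xh xt xb = (\<mu> (fst ub) (fst xh) (fst xb), 1, \<eta> (fst xh) (fst xt) (fst xb))"

definition phi2 :: "((real^'n) \<Rightarrow> (real^'n) \<Rightarrow> (real^'n) \<Rightarrow> (real^'m))
    \<Rightarrow> ((real^'m) \<times> real \<times> (real^'m)) \<Rightarrow> ((real^'n) \<times> (real^'m) \<times> real)
    \<Rightarrow> ((real^'n) \<times> (real^'m) \<times> real) \<Rightarrow> ((real^'n) \<times> (real^'m) \<times> real)
    \<Rightarrow> ((real^'m) \<times> real \<times> (real^'m))" where
  "phi2 \<eta> ub xh xt xb = (0, 0, \<eta> (fst xh) (fst xt) (fst xb))"

end

theory Submission
  imports Defs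
begin

(* The estimation error x - xh is driven by the same input as xh, so its input and counter
   components stay zero and its plant component obeys e' = (A - LC) e + w - L v; the invariance
   of Psip keeps it in Psip.  In the deviation xh - xb the counter component is zero because both
   trajectories see the same mode, and the input component is frozen after the triggering step.
   The plant component d therefore satisfies d' = A d + B (mu - ubc + eta) + L (C e + v), with
   mu - ubc taken at the triggering step.
   Subtracting the disturbance-free response, (A^i + B^i K) d(t) for ZOH and (A + BK)^i d(t) for
   the prediction-based law (the latter is exactly the predicted deviation xt - xb), leaves a sum
   of terms in A^j L (C Psip + Vp), so the tube condition for i <= H yields d in Omegap; for the
   local-measurement law one-step invariance of Omegap under A + BK suffices. *)

lemma msum_mem: "a \<in> X \<Longrightarrow> b \<in> Y \<Longrightarrow> a + b \<in> msum X Y"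
  by (auto simp: msum_def)

lemma mem_msum_singleton: "y \<in> msum {a} S \<longleftrightarrow> y - (a::'a::ab_group_add) \<in> S"
  by (force simp: msum_def)

lemma msum_singleton_subset: "a \<in> X \<Longrightarrow> msum {a} Y \<subseteq> msum X Y"
  by (auto simp: msum_def)

lemma uminus_matrix_vector_mult: "(- (M :: real^'n^'m)) *v y = - (M *v y)"
  by (simp add: matrix_vector_mult_def vec_eq_iff sum_negf)

lemma mpow_0 [simp]: "mpow A 0 = mat 1"
  by (simp add: mpow_def)

lemma mpow_Suc: "mpow A (Suc k) = A ** mpow A k"
  by (simp add: mpow_def)

lemma Bpow_0 [simp]: "Bpow A B 0 = 0"
  by (simp add: Bpow_def)

lemma Bpow_Suc: "Bpow A B (Suc k) = A ** Bpow A B k + B"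
proof (induction k)
  case (Suc k)
  have "Bpow A B (Suc (Suc k)) = Bpow A B (Suc k) + mpow A (Suc k) ** B"
    by (simp add: Bpow_def)
  also have "\<dots> = A ** (Bpow A B k + mpow A k ** B) + B"
    by (simp add: Suc mpow_Suc matrix_mul_assoc matrix_add_ldistrib)
  finally show ?case
    by (simp add: Bpow_def)
qed (simp add: Bpow_def)

lemma msumN_powers_Suc:
  assumes "d \<in> msumN k (\<lambda>j. lin (mpow A j) N)" "n \<in> N"
  shows "A *v d + n \<in> msumN (Suc k) (\<lambda>j. lin (mpow A j) N)"
  using assms(1)
proof (induction k arbitrary: d)
  case 0
  then show ?case
    using msum_mem[of 0 "{0}" n "lin (mat 1) N"] assms(2) by (simp add: lin_def)
next
  case (Suc k)
  then obtain d' y where d: "d = d' + mpow A k *v y"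
    and d': "d' \<in> msumN k (\<lambda>j. lin (mpow A j) N)" and y: "y \<in> N"
    by (auto simp: msum_def lin_def)
  have "A *v d + n = (A *v d' + n) + mpow A (Suc k) *v y"
    by (simp add: d mpow_Suc matrix_vector_right_distrib matrix_vector_mul_assoc)
  also have "\<dots> \<in> msumN (Suc (Suc k)) (\<lambda>j. lin (mpow A j) N)"
    using Suc.IH[OF d'] y by (auto simp: lin_def intro: msum_mem)
  finally show ?case .
qed

lemma accumulated_disturbance:
  assumes "e 0 = 0" and "\<forall>k<i. e (Suc k) = A *v e k + n k" and "\<forall>k<i. n k \<in> N"
  shows "e i \<in> msumN i (\<lambda>j. lin (mpow A j) N)"
  using assms(2,3)
proof (induction i)
  case (Suc i)
  then show ?case
    using msumN_powers_Suc[of "e i" i A N "n i"] by simp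
qed (simp add: assms(1))

lemma deviation_in_tube:
  fixes M :: "nat \<Rightarrow> real^'n^'n"
  assumes tube: "\<forall>i\<in>{1..H}. msum (lin (M i) \<Omega>) (msumN i (\<lambda>j. lin (mpow A j) N)) \<subseteq> \<Omega>"
    and "M 0 = mat 1" and "d 0 \<in> \<Omega>" and "i \<le> H"
    and "\<forall>k<i. d (Suc k) - M (Suc k) *v d 0 = A *v (d k - M k *v d 0) + n k"
    and "\<forall>k<i. n k \<in> N"
  shows "d i \<in> \<Omega>"
proof (cases "i = 0")
  case False
  have "d i - M i *v d 0 \<in> msumN i (\<lambda>j. lin (mpow A j) N)"
    by (rule accumulated_disturbance[where e = "\<lambda>k. d k - M k *v d 0"]) (use assms in auto)
  moreover have "M i *v d 0 \<in> lin (M i) \<Omega>"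
    using \<open>d 0 \<in> \<Omega>\<close> by (simp add: lin_def)
  ultimately have "M i *v d 0 + (d i - M i *v d 0) \<in> msum (lin (M i) \<Omega>) (msumN i (\<lambda>j. lin (mpow A j) N))"
    by (rule msum_mem[rotated])
  then show ?thesis
    using tube False \<open>i \<le> H\<close> by auto
qed (simp add: \<open>d 0 \<in> \<Omega>\<close>)

lemma deviation_in_invariant_set:
  assumes inv: "msum (lin M \<Omega>) N \<subseteq> \<Omega>" and "d 0 \<in> \<Omega>"
    and "\<forall>k<i. d (Suc k) = M *v d k + n k" and "\<forall>k<i. n k \<in> N"
  shows "d i \<in> \<Omega>"
  using assms(3,4)
proof (induction i)
  case (Suc i)
  then have "M *v d i + n i \<in> msum (lin M \<Omega>) N"
    by (auto simp: lin_def intro: msum_mem)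
  then show ?case
    using inv Suc.prems by auto
qed (simp add: \<open>d 0 \<in> \<Omega>\<close>)

lemma fst_fsys:
  "fst (fsys A B g c b x u) = A *v fst x + B *v (fst (snd (fsys A B g c b x u)) + snd (snd u))"
  by (simp add: fsys_def split: prod.splits)

lemma fst_snd_fsys:
  "fst (snd (fsys A B g c b x u)) = (1 - fst (snd u)) *\<^sub>R fst (snd x) + fst (snd u) *\<^sub>R fst u"
  by (simp add: fsys_def split: prod.splits)

lemma snd_snd_fsys:
  "snd (snd (fsys A B g c b x u)) = min (snd (snd x) + of_int g - fst (snd u) * of_int c) (of_int b)"
  by (simp add: fsys_def split: prod.splits)

lemma fsys_diff_same_memory:
  "snd x = snd y \<Longrightarrow> fsys A B g c b x u - fsys A B g c b y u = (A *v (fst x - fst y), 0, 0)"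
  by (cases x, cases y, cases u) (simp add: fsys_def zero_prod_def matrix_vector_mult_diff_distrib)

lemma hold_transition_Suc:
  "(mpow A (Suc k) + Bpow A B (Suc k) ** K) *v y
     = A *v ((mpow A k + Bpow A B k ** K) *v y) + B *v (K *v y)"
  by (simp add: mpow_Suc Bpow_Suc matrix_vector_mult_add_rdistrib matrix_vector_right_distrib
      matrix_vector_mul_assoc[symmetric] add.assoc)

locale closed_loop =
  fixes A :: "real^'n^'n" and B :: "real^'m^'n" and C :: "real^'n^'q" and L :: "real^'q^'n"
    and g c b :: int and t h :: nat
    and Wp Psip :: "(real^'n) set" and Vp :: "(real^'q) set"
    and \<mu> :: "real^'m \<Rightarrow> real^'n \<Rightarrow> real^'n \<Rightarrow> real^'m"
    and \<eta> :: "real^'n \<Rightarrow> real^'n \<Rightarrow> real^'n \<Rightarrow> real^'m"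
    and ubc :: "nat \<Rightarrow> real^'m" and gb :: "nat \<Rightarrow> real"
    and x xh xt xb :: "nat \<Rightarrow> (real^'n) \<times> (real^'m) \<times> real"
    and u :: "nat \<Rightarrow> (real^'m) \<times> real \<times> (real^'m)"
    and w :: "nat \<Rightarrow> (real^'n) \<times> (real^'m) \<times> real"
    and v :: "nat \<Rightarrow> (real^'q) \<times> (real^'m) \<times> real"
  assumes Psi_inv: "msum (msum (lin (A - L ** C) Psip) Wp) (lin (- L) Vp) \<subseteq> Psip"
    and gb_t: "gb t = 1"
    and gb_rest: "\<forall>i\<in>{t+1..<t+h}. gb i = 0"
    and init_Psi: "x t - xh t \<in> Psip \<times> {0} \<times> {0}"
    and init_xt: "xt t = xh t"
    and u_def: "\<forall>i\<in>{t..<t+h}. u i =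
                  (if gb i = 1 then phi1 \<mu> \<eta> (ubc i, gb i, 0) (xh i) (xt i) (xb i)
                   else phi2 \<eta> (ubc i, gb i, 0) (xh i) (xt i) (xb i))"
    and xb_step: "\<forall>i\<in>{t..<t+h}. xb (Suc i) = fsys A B g c b (xb i) (ubc i, gb i, 0)"
    and xt_step: "\<forall>i\<in>{t..<t+h}. xt (Suc i) = fsys A B g c b (xt i) (u i)"
    and x_step: "\<forall>i\<in>{t..<t+h}. x (Suc i) = fsys A B g c b (x i) (u i) + w i"
    and xh_step: "\<forall>i\<in>{t..<t+h}. xh (Suc i) = fsys A B g c b (xh i) (u i)
                     + (L ** C *v fst (x i - xh i), 0, 0) + (L *v fst (v i), 0, 0)"
    and w_in: "\<forall>i\<in>{t..<t+h}. w i \<in> Wp \<times> {0} \<times> {0}"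
    and v_in: "\<forall>i\<in>{t..<t+h}. v i \<in> Vp \<times> {0} \<times> {0}"
begin

definition est_dev :: "nat \<Rightarrow> real^'n" where
  "est_dev k = fst (xh (t+k)) - fst (xb (t+k))"

definition pred_dev :: "nat \<Rightarrow> real^'n" where
  "pred_dev k = fst (xt (t+k)) - fst (xb (t+k))"

definition input_dev :: "nat \<Rightarrow> real^'m" where
  "input_dev k = fst (snd (xh (t+k))) - fst (snd (xb (t+k)))"

definition trigger_offset :: "real^'m" where
  "trigger_offset = \<mu> (ubc t) (fst (xh t)) (fst (xb t)) - ubc t"

definition correction :: "nat \<Rightarrow> real^'m" where
  "correction k = \<eta> (fst (xh (t+k))) (fst (xt (t+k))) (fst (xb (t+k)))"

definition injection :: "nat \<Rightarrow> real^'n" where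
  "injection k = L *v (C *v (fst (x (t+k)) - fst (xh (t+k))) + fst (v (t+k)))"

lemma u_trigger: "0 < h \<Longrightarrow> u t = (\<mu> (ubc t) (fst (xh t)) (fst (xb t)), 1, correction 0)"
  using u_def gb_t by (simp add: phi1_def correction_def)

lemma u_hold: "0 < k \<Longrightarrow> k < h \<Longrightarrow> gb (t+k) = 0 \<and> u (t+k) = (0, 0, correction k)"
  using u_def gb_rest by (simp add: phi2_def correction_def)

lemma u_mode_correction:
  "k < h \<Longrightarrow> fst (snd (u (t+k))) = gb (t+k) \<and> snd (snd (u (t+k))) = correction k"
  using u_trigger u_hold[of k] gb_t by (cases "k = 0") auto

(* The trigger (mode 1) overwrites the held input of every trajectory, mode 0 keeps it, so the
   difference to the nominal held input is frozen after one step, whatever y is. *)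
lemma held_input_deviation:
  assumes y_step: "\<forall>i\<in>{t..<t+h}. fst (snd (y (Suc i))) = fst (snd (fsys A B g c b (y i) (u i)))"
    and "k < h"
  shows "fst (snd (y (t + Suc k))) - fst (snd (xb (t + Suc k))) = trigger_offset"
  using \<open>k < h\<close>
proof (induction k)
  case 0
  then show ?case
    using y_step xb_step u_trigger gb_t by (simp add: fst_snd_fsys trigger_offset_def)
next
  case (Suc k)
  then show ?case
    using y_step xb_step u_hold[of "Suc k"] by (simp add: fst_snd_fsys)
qed

lemma driven_deviation_Suc:
  assumes y_step: "\<forall>i\<in>{t..<t+h}. y (Suc i) = fsys A B g c b (y i) (u i) + (p i, 0, 0)"
    and "k < h"
  shows "fst (y (t + Suc k)) - fst (xb (t + Suc k))
           = A *v (fst (y (t+k)) - fst (xb (t+k))) + B *v (trigger_offset + correction k) + p (t+k)"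
proof -
  let ?i = "t + k"
  have i: "?i \<in> {t..<t+h}"
    using \<open>k < h\<close> by simp
  have held: "fst (snd (y (Suc ?i))) - fst (snd (xb (Suc ?i))) = trigger_offset"
    using held_input_deviation[of y] y_step \<open>k < h\<close> by simp
  have "fst (y (Suc ?i)) = A *v fst (y ?i) + B *v (fst (snd (y (Suc ?i))) + correction k) + p ?i"
    using y_step i u_mode_correction[OF \<open>k < h\<close>] fst_fsys[of A B g c b "y ?i" "u ?i"] by simp
  moreover have "fst (xb (Suc ?i)) = A *v fst (xb ?i) + B *v fst (snd (xb (Suc ?i)))"
    using xb_step i fst_fsys[of A B g c b "xb ?i" "(ubc ?i, gb ?i, 0)"] by simp
  ultimately show ?thesis
    using held by (simp add: algebra_simps)
qed

lemma est_dev_Suc: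
  "k < h \<Longrightarrow> est_dev (Suc k) = A *v est_dev k + B *v (trigger_offset + correction k) + injection k"
  using driven_deviation_Suc[of xh "\<lambda>i. L ** C *v fst (x i - xh i) + L *v fst (v i)" k] xh_step
  by (simp add: est_dev_def injection_def matrix_vector_right_distrib matrix_vector_mul_assoc)

lemma pred_dev_Suc:
  "k < h \<Longrightarrow> pred_dev (Suc k) = A *v pred_dev k + B *v (trigger_offset + correction k)"
  using driven_deviation_Suc[of xt "\<lambda>_. 0" k] xt_step by (simp add: pred_dev_def zero_prod_def)

lemma input_dev_held: "0 < k \<Longrightarrow> k \<le> h \<Longrightarrow> input_dev k = trigger_offset"
  using held_input_deviation[of xh "k - 1"] xh_step by (simp add: input_dev_def)

lemma counter_deviation:
  assumes "snd (snd (xh t)) = snd (snd (xb t))" and "k \<le> h"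
  shows "snd (snd (xh (t+k))) = snd (snd (xb (t+k)))"
  using \<open>k \<le> h\<close>
proof (induction k)
  case (Suc k)
  then show ?case
    using xh_step xb_step u_mode_correction[of k] by (simp add: snd_snd_fsys)
qed (use assms(1) in simp)

lemma estimation_error_in_Psi: "k \<le> h \<Longrightarrow> x (t+k) - xh (t+k) \<in> Psip \<times> {0} \<times> {0}"
proof (induction k)
  case (Suc k)
  let ?i = "t + k"
  have i: "?i \<in> {t..<t+h}"
    using Suc.prems by simp
  obtain e where e: "x ?i - xh ?i = (e, 0, 0)" "e \<in> Psip"
    using Suc by (force simp: mem_Times_iff prod_eq_iff)
  obtain w1 where w1: "w ?i = (w1, 0, 0)" "w1 \<in> Wp"
    using w_in i by (force simp: mem_Times_iff prod_eq_iff)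
  obtain v1 where v1: "fst (v ?i) = v1" "v1 \<in> Vp"
    using v_in i by (force simp: mem_Times_iff)
  have "snd (x ?i) = snd (xh ?i)"
    using e(1) by (simp add: prod_eq_iff)
  then have "x (Suc ?i) - xh (Suc ?i) = ((A - L ** C) *v e + w1 + (- L) *v v1, 0, 0)"
    using x_step xh_step i fsys_diff_same_memory[of "x ?i" "xh ?i" A B g c b "u ?i"] e(1) w1(1) v1(1)
    by (simp add: algebra_simps uminus_matrix_vector_mult)
  moreover have "(A - L ** C) *v e + w1 + (- L) *v v1 \<in> Psip"
    using Psi_inv e(2) w1(2) v1(2) by (auto simp: lin_def intro!: msum_mem)
  ultimately show ?case
    by simp
qed (use init_Psi in simp)

lemma injection_in_LCPV: "k < h \<Longrightarrow> injection k \<in> LCPV L C Psip Vp"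
  using estimation_error_in_Psi[of k] v_in
  by (auto simp: injection_def LCPV_def lin_def mem_Times_iff intro!: msum_mem)

lemma deviation_in_product:
  assumes "xh t - xb t \<in> X \<times> Y \<times> {0}" and "k \<le> h"
    and "est_dev k \<in> X" and "input_dev k \<in> Y"
  shows "xh (t+k) - xb (t+k) \<in> X \<times> Y \<times> {0}"
  using counter_deviation[OF _ \<open>k \<le> h\<close>] assms
  by (simp add: est_dev_def input_dev_def mem_Times_iff)

lemma ZOH_deviation_in_Omega:
  assumes opt: "opt_ZOH A B L C K Psip Vp H Omegap \<mu> \<eta> Omega"
    and "h \<le> H" and init: "xh t - xb t \<in> Omega" and "k \<le> h"
  shows "xh (t+k) - xb (t+k) \<in> Omega"
proof -
  from opt have tube: "\<forall>i\<in>{1..H}. msum (lin (mpow A i + Bpow A B i ** K) Omegap)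
                        (msumN i (\<lambda>j. lin (mpow A j) (LCPV L C Psip Vp))) \<subseteq> Omegap"
    and offset: "trigger_offset = K *v est_dev 0" and correction: "\<And>j. correction j = 0"
    and Omega: "Omega = Omegap \<times> lin K Omegap \<times> {0}"
    by (simp_all add: opt_ZOH_def trigger_offset_def correction_def est_dev_def)
  have d0: "est_dev 0 \<in> Omegap" and s0: "input_dev 0 \<in> lin K Omegap"
    using init by (auto simp: Omega est_dev_def input_dev_def mem_Times_iff prod_eq_iff)
  have step: "est_dev (Suc j) - (mpow A (Suc j) + Bpow A B (Suc j) ** K) *v est_dev 0
               = A *v (est_dev j - (mpow A j + Bpow A B j ** K) *v est_dev 0) + injection j"
    if "j < h" for j
    unfolding hold_transition_Suc est_dev_Suc[OF that] by (simp add: offset correction algebra_simps)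
  have "est_dev k \<in> Omegap"
    by (rule deviation_in_tube[where M = "\<lambda>i. mpow A i + Bpow A B i ** K", OF tube])
      (use d0 step injection_in_LCPV \<open>k \<le> h\<close> \<open>h \<le> H\<close> in auto)
  moreover have "input_dev k \<in> lin K Omegap"
    using s0 d0 input_dev_held[of k] \<open>k \<le> h\<close> by (cases "k = 0") (auto simp: offset lin_def)
  ultimately show ?thesis
    using deviation_in_product[OF init[unfolded Omega] \<open>k \<le> h\<close>] unfolding Omega by simp
qed

lemma pred_deviation_in_Omega:
  assumes opt: "opt_pred A B L C K Psip Vp H Omegap \<mu> \<eta> Omega"
    and "h \<le> H" and init: "xh t - xb t \<in> Omega" and "k \<le> h"
  shows "xh (t+k) - xb (t+k) \<in> Omega"
proof -
  from opt have tube: "\<forall>i\<in>{1..H}. msum (lin (mpow (A + B ** K) i) Omegap)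
                        (msumN i (\<lambda>j. lin (mpow A j) (LCPV L C Psip Vp))) \<subseteq> Omegap"
    and offset: "trigger_offset = 0" and correction: "\<And>j. correction j = K *v pred_dev j"
    and Omega: "Omega = Omegap \<times> {0} \<times> {0}"
    by (simp_all add: opt_pred_def trigger_offset_def correction_def pred_dev_def)
  have d0: "est_dev 0 \<in> Omegap" and s0: "input_dev 0 = 0"
    using init by (auto simp: Omega est_dev_def input_dev_def mem_Times_iff prod_eq_iff)
  have pred: "pred_dev j = mpow (A + B ** K) j *v est_dev 0" if "j \<le> h" for j
    using that
  proof (induction j)
    case (Suc j)
    then show ?case
      by (simp add: pred_dev_Suc offset correction mpow_Suc matrix_vector_mult_add_rdistrib
          matrix_vector_mul_assoc[symmetric])
  qed (simp add: pred_dev_def est_dev_def init_xt)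
  have "est_dev k \<in> Omegap"
  proof (rule deviation_in_tube[where M = "mpow (A + B ** K)", OF tube])
    show "\<forall>j<k. est_dev (Suc j) - mpow (A + B ** K) (Suc j) *v est_dev 0
               = A *v (est_dev j - mpow (A + B ** K) j *v est_dev 0) + injection j"
      using \<open>k \<le> h\<close> pred_dev_Suc pred
      by (simp add: est_dev_Suc offset correction algebra_simps)
  qed (use d0 injection_in_LCPV \<open>k \<le> h\<close> \<open>h \<le> H\<close> in auto)
  moreover have "input_dev k = 0"
    using s0 input_dev_held[of k] \<open>k \<le> h\<close> by (cases "k = 0") (auto simp: offset)
  ultimately show ?thesis
    using deviation_in_product[OF init[unfolded Omega] \<open>k \<le> h\<close>] unfolding Omega by simp
qed

lemma local_deviation_in_Omega:
  assumes opt: "opt_local A B L C K Psip Vp Omegap \<mu> \<eta> Omega"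
    and init: "xh t - xb t \<in> Omega" and "k \<le> h"
  shows "xh (t+k) - xb (t+k) \<in> Omega"
proof -
  from opt have inv: "msum (lin (A + B ** K) Omegap) (LCPV L C Psip Vp) \<subseteq> Omegap"
    and offset: "trigger_offset = 0" and correction: "\<And>j. correction j = K *v est_dev j"
    and Omega: "Omega = Omegap \<times> {0} \<times> {0}"
    by (simp_all add: opt_local_def trigger_offset_def correction_def est_dev_def)
  have d0: "est_dev 0 \<in> Omegap" and s0: "input_dev 0 = 0"
    using init by (auto simp: Omega est_dev_def input_dev_def mem_Times_iff prod_eq_iff)
  have "est_dev k \<in> Omegap"
  proof (rule deviation_in_invariant_set[where d = est_dev, OF inv d0])
    show "\<forall>j<k. est_dev (Suc j) = (A + B ** K) *v est_dev j + injection j"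
      using \<open>k \<le> h\<close>
      by (simp add: est_dev_Suc offset correction matrix_vector_mult_add_rdistrib matrix_vector_mul_assoc)
  qed (use injection_in_LCPV \<open>k \<le> h\<close> in auto)
  moreover have "input_dev k = 0"
    using s0 input_dev_held[of k] \<open>k \<le> h\<close> by (cases "k = 0") (auto simp: offset)
  ultimately show ?thesis
    using deviation_in_product[OF init[unfolded Omega] \<open>k \<le> h\<close>] unfolding Omega by simp
qed

end

theorem proposition1:
  fixes A :: "((real^'n)^'n)" and B :: "((real^'m)^'n)" and C :: "((real^'n)^'q)"
    and L :: "((real^'q)^'n)" and K :: "((real^'n)^'m)"
    and Wp :: "(real^'n) set" and Vp :: "(real^'q) set"
    and Psip Omegap :: "(real^'n) set"
    and g c b :: int and H h t :: nat
    and \<mu> :: "(real^'m) \<Rightarrow> (real^'n) \<Rightarrow> (real^'n) \<Rightarrow> (real^'m)"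
    and \<eta> :: "(real^'n) \<Rightarrow> (real^'n) \<Rightarrow> (real^'n) \<Rightarrow> (real^'m)"
    and Omega :: "((real^'n) \<times> (real^'m) \<times> real) set"
    and ubc :: "nat \<Rightarrow> (real^'m)" and gb :: "nat \<Rightarrow> real"
    and x xh xt xb :: "nat \<Rightarrow> (real^'n) \<times> (real^'m) \<times> real"
    and u :: "nat \<Rightarrow> (real^'m) \<times> real \<times> (real^'m)"
    and w :: "nat \<Rightarrow> (real^'n) \<times> (real^'m) \<times> real"
    and v :: "nat \<Rightarrow> (real^'q) \<times> (real^'m) \<times> real"
  assumes Wp: "compact Wp" "convex Wp" "0 \<in> Wp"
    and Vp: "compact Vp" "convex Vp" "0 \<in> Vp"
    and gcb: "g \<ge> 1" "c \<ge> g" "b \<ge> c"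
    and Psi_inv: "msum (msum (lin (A - L ** C) Psip) Wp) (lin (- L) Vp) \<subseteq> Psip"
    and Psi0: "0 \<in> Psip"
    and Omega0: "0 \<in> Omegap"
    and opt: "opt_ZOH A B L C K Psip Vp H Omegap \<mu> \<eta> Omega
              \<or> opt_pred A B L C K Psip Vp H Omegap \<mu> \<eta> Omega
              \<or> opt_local A B L C K Psip Vp Omegap \<mu> \<eta> Omega"
    and h: "h \<in> {1..H}"
    and gb_t: "gb t = 1"
    and gb_rest: "\<forall>i\<in>{t+1..<t+h}. gb i = 0"
    and init_Omega: "xh t - xb t \<in> Omega"
    and init_Psi: "x t - xh t \<in> Psip \<times> {0} \<times> {0}"
    and init_xt: "xt t = xh t"
    and u_def: "\<forall>i\<in>{t..<t+h}. u i =
                  (if gb i = 1 then phi1 \<mu> \<eta> (ubc i, gb i, 0) (xh i) (xt i) (xb i)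
                   else phi2 \<eta> (ubc i, gb i, 0) (xh i) (xt i) (xb i))"
    and xb_step: "\<forall>i\<in>{t..<t+h}. xb (Suc i) = fsys A B g c b (xb i) (ubc i, gb i, 0)"
    and xt_step: "\<forall>i\<in>{t..<t+h}. xt (Suc i) = fsys A B g c b (xt i) (u i)"
    and x_step: "\<forall>i\<in>{t..<t+h}. x (Suc i) = fsys A B g c b (x i) (u i) + w i"
    and xh_step: "\<forall>i\<in>{t..<t+h}. xh (Suc i) = fsys A B g c b (xh i) (u i)
                     + (L ** C *v fst (x i - xh i), 0, 0) + (L *v fst (v i), 0, 0)"
    and w_in: "\<forall>i\<in>{t..<t+h}. w i \<in> Wp \<times> {0} \<times> {0}"
    and v_in: "\<forall>i\<in>{t..<t+h}. v i \<in> Vp \<times> {0} \<times> {0}"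
  shows "\<forall>i\<in>{t..t+h}.
           xh i \<in> msum {xb i} Omega
         \<and> x i \<in> msum {xh i} (Psip \<times> {0} \<times> {0})
         \<and> msum {xh i} (Psip \<times> {0} \<times> {0})
             \<subseteq> msum (msum {xb i} Omega) (Psip \<times> {0} \<times> {0})"
proof -
  interpret closed_loop A B C L g c b t h Wp Psip Vp \<mu> \<eta> ubc gb x xh xt xb u w v
    by unfold_locales (fact assms)+
  have hH: "h \<le> H"
    using h by simp
  have tube: "xh (t+k) - xb (t+k) \<in> Omega" if "k \<le> h" for k
    using opt
  proof (elim disjE)
    assume "opt_ZOH A B L C K Psip Vp H Omegap \<mu> \<eta> Omega"
    then show ?thesis by (rule ZOH_deviation_in_Omega[OF _ hH init_Omega that])
  next
    assume "opt_pred A B L C K Psip Vp H Omegap \<mu> \<eta> Omega"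
    then show ?thesis by (rule pred_deviation_in_Omega[OF _ hH init_Omega that])
  next
    assume "opt_local A B L C K Psip Vp Omegap \<mu> \<eta> Omega"
    then show ?thesis by (rule local_deviation_in_Omega[OF _ init_Omega that])
  qed
  show ?thesis
  proof
    fix i assume "i \<in> {t..t+h}"
    then obtain k where i: "i = t + k" and k: "k \<le> h"
      by (metis atLeastAtMost_iff le_add_diff_inverse add_le_cancel_left)
    have "xh i \<in> msum {xb i} Omega"
      using tube[OF k] by (simp add: i mem_msum_singleton)
    moreover have "x i \<in> msum {xh i} (Psip \<times> {0} \<times> {0})"
      using estimation_error_in_Psi[OF k] by (simp add: i mem_msum_singleton)
    ultimately show "xh i \<in> msum {xb i} Omega \<and> x i \<in> msum {xh i} (Psip \<times> {0} \<times> {0})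
         \<and> msum {xh i} (Psip \<times> {0} \<times> {0}) \<subseteq> msum (msum {xb i} Omega) (Psip \<times> {0} \<times> {0})"
      using msum_singleton_subset by blast
  qed
qed

end
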